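(* For every prime power $q$, $M_q\!\left(\frac{q-1}{q+1}\right)<\frac{1}{q+1}$.
   Context: $H_q(x)=x\log_q(q-1)-x\log_q x-(1-x)\log_q(1-x)$ is the $q$-ary entropy and $M_q(\delta)=H_q\!\left(\frac1q\left(q-1-(q-2)\delta-2\sqrt{(q-1)\delta(1-\delta)}\right)\right)$. *)

theory Defs
  imports Complex_Main "HOL-Number_Theory.Prime_Powers"
begin

text \<open>q-ary entropy H_q(x) = x log_q(q-1) - x log_q x - (1-x) log_q(1-x).
  (Isabelle's log q 0 = 0, so the usual convention 0 log 0 = 0 holds.)\<close>
definition Hq :: "real \<Rightarrow> real \<Rightarrow> real" where
  "Hq q x = x * log q (q - 1) - x * log q x - (1 - x) * log q (1 - x)"

definition Mq :: "real \<Rightarrow> real \<Rightarrow> real" where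
  "Mq q \<delta> = Hq q ((1 / q) * (q - 1 - (q - 2) * \<delta> - 2 * sqrt ((q - 1) * \<delta> * (1 - \<delta>))))"

end

theory Submission
  imports Defs
begin

text \<open>At \<open>\<delta> = (q-1)/(q+1)\<close> one has \<open>(q-1)\<delta>(1-\<delta>) = 2\<delta>\<^sup>2\<close>, so the argument of \<open>H\<^sub>q\<close>
  collapses to \<open>x = (q-1)/((3+2\<surd>2) q (q+1))\<close>, which is of order \<open>1/q\<close>. The estimate
  \<open>-(1-x) ln(1-x) \<le> x\<close> gives \<open>H\<^sub>q(x) ln q \<le> x (ln((q-1)/x) + 1)\<close>, and the claim reduces to
  \<open>(q-1)(ln q + ln(q+1) + ln(3+2\<surd>2) + 1) < (3+2\<surd>2) q ln q\<close>. Since \<open>q - 1 \<le> q ln q\<close>,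
  \<open>ln(q+1) \<le> ln q + 1/q\<close> and \<open>ln(3+2\<surd>2) \<le> 2\<close>, the left side is at most \<open>11/2 \<cdot> q ln q\<close>,
  and \<open>11/2 < 3+2\<surd>2\<close>.\<close>

lemma minus_mult_ln_one_minus_le:
  fixes x :: real
  assumes "x < 1"
  shows "- ((1 - x) * ln (1 - x)) \<le> x"
proof -
  have "- ln (1 - x) \<le> x / (1 - x)"
    using ln_diff_le[of 1 "1 - x"] assms by simp
  then have "(1 - x) * - ln (1 - x) \<le> (1 - x) * (x / (1 - x))"
    using assms by (intro mult_left_mono) auto
  then show ?thesis
    using assms by simp
qed

lemma Hq_le:
  fixes q x :: real
  assumes "1 < q" "0 < x" "x < 1"
  shows "Hq q x \<le> x * (ln ((q - 1) / x) + 1) / ln q"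
proof -
  have "Hq q x * ln q = x * ln ((q - 1) / x) - (1 - x) * ln (1 - x)"
    using assms by (simp add: Hq_def log_def ln_div field_simps)
  also have "\<dots> \<le> x * (ln ((q - 1) / x) + 1)"
    using minus_mult_ln_one_minus_le[OF \<open>x < 1\<close>] by (simp add: algebra_simps)
  finally show ?thesis
    using assms by (simp add: pos_le_divide_eq)
qed

lemma Mq_at_ratio:
  fixes q :: real
  assumes "1 \<le> q"
  shows "Mq q ((q - 1) / (q + 1)) = Hq q ((q - 1) / ((3 + 2 * sqrt 2) * q * (q + 1)))"
proof -
  define \<delta> where "\<delta> = (q - 1) / (q + 1)"
  have "(q - 1) * \<delta> * (1 - \<delta>) = 2 * \<delta>\<^sup>2"
    using assms by (simp add: \<delta>_def field_simps power2_eq_square)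
  then have sqrt_eq: "sqrt ((q - 1) * \<delta> * (1 - \<delta>)) = sqrt 2 * \<delta>"
    using assms by (simp add: \<delta>_def real_sqrt_mult)
  have "(3 - 2 * sqrt 2) * (3 + 2 * sqrt 2) = (1::real)"
    by (simp add: algebra_simps)
  then have inverse_eq: "3 - 2 * sqrt 2 = 1 / (3 + 2 * sqrt (2::real))"
    by (simp add: eq_divide_eq add_nonneg_eq_0_iff)
  have "q - 1 = (q + 1) * \<delta>"
    using assms by (simp add: \<delta>_def)
  then have "q - 1 - (q - 2) * \<delta> - 2 * (sqrt 2 * \<delta>) = (3 - 2 * sqrt 2) * \<delta>"
    by (simp add: algebra_simps)
  then have "(1 / q) * (q - 1 - (q - 2) * \<delta> - 2 * sqrt ((q - 1) * \<delta> * (1 - \<delta>)))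
      = (q - 1) / ((3 + 2 * sqrt 2) * q * (q + 1))"
    unfolding sqrt_eq inverse_eq by (simp add: \<delta>_def)
  then show ?thesis
    by (simp add: Mq_def \<delta>_def)
qed

lemma ln_3_plus_2_sqrt2_le: "ln (3 + 2 * sqrt 2) \<le> (2::real)"
proof -
  have "sqrt 2 \<le> (37/25::real)"
    by (rule real_le_lsqrt) (simp_all add: power2_eq_square)
  then have "3 + 2 * sqrt 2 \<le> (1 + 2 / 8 :: real) ^ 8"
    by (simp add: power_divide)
  also have "\<dots> \<le> exp 2"
    using exp_ge_one_plus_x_over_n_power_n[of 8 2] by simp
  finally show ?thesis
    using ln_mono[of "3 + 2 * sqrt 2" "exp 2"] by (simp add: add_pos_nonneg)
qed

lemma ln_sum_mult_less:
  fixes q :: real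
  assumes "2 \<le> q"
  shows "(q - 1) * (ln q + ln (q + 1) + ln (3 + 2 * sqrt 2) + 1) < (3 + 2 * sqrt 2) * (q * ln q)"
proof -
  have pos: "0 < q * ln q"
    using assms by simp
  have minus_one_le: "q - 1 \<le> q * ln q"
    using ln_diff_le[of 1 q] assms by (simp add: field_simps)
  have "ln (q + 1) - ln q \<le> 1 / q"
    using ln_diff_le[of "q + 1" q] assms by simp
  moreover have "1 / q \<le> 1 / 2"
    using assms by simp
  ultimately have "ln q + ln (q + 1) + ln (3 + 2 * sqrt 2) + 1 \<le> 2 * ln q + 7 / 2"
    using ln_3_plus_2_sqrt2_le by linarith
  then have "(q - 1) * (ln q + ln (q + 1) + ln (3 + 2 * sqrt 2) + 1) \<le> (q - 1) * (2 * ln q + 7 / 2)"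
    using assms by (intro mult_left_mono) auto
  also have "\<dots> = 2 * ((q - 1) * ln q) + 7 / 2 * (q - 1)"
    by (simp add: algebra_simps)
  also have "\<dots> \<le> 11 / 2 * (q * ln q)"
  proof -
    have "0 \<le> ln q"
      using assms by simp
    then show ?thesis
      using minus_one_le by (simp add: algebra_simps)
  qed
  also have "\<dots> < (3 + 2 * sqrt 2) * (q * ln q)"
  proof (rule mult_strict_right_mono[OF _ pos])
    have "5 / 4 < sqrt (2::real)"
      by (rule real_less_rsqrt) (simp add: power2_eq_square)
    then show "11 / 2 < 3 + 2 * sqrt (2::real)"
      by simp
  qed
  finally show ?thesis .
qed

theorem Mq_ratio_less:
  fixes q :: real
  assumes "2 \<le> q"
  shows "Mq q ((q - 1) / (q + 1)) < 1 / (q + 1)"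
proof -
  define b where "b = 3 + 2 * sqrt (2::real)"
  define x where "x = (q - 1) / (b * q * (q + 1))"
  have b: "1 < b"
    by (simp add: b_def add_pos_nonneg)
  have "0 < x"
    using assms b by (simp add: x_def)
  moreover have "x < 1"
  proof -
    have "q - 1 < 1 * (q * (q + 1))"
      using assms by (simp add: algebra_simps add_pos_nonneg)
    also have "\<dots> \<le> b * (q * (q + 1))"
      using assms b by (intro mult_right_mono) auto
    finally show ?thesis
      using assms b by (simp add: x_def mult.assoc)
  qed
  ultimately have "Mq q ((q - 1) / (q + 1)) \<le> x * (ln ((q - 1) / x) + 1) / ln q"
    using Mq_at_ratio[of q] Hq_le[of q x] assms by (simp add: b_def x_def)
  also have "\<dots> = (q - 1) * (ln q + ln (q + 1) + ln b + 1) / (b * (q * ln q) * (q + 1))"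
  proof -
    have "(q - 1) / x = b * q * (q + 1)"
      using assms b by (simp add: x_def)
    then have "ln ((q - 1) / x) = ln q + ln (q + 1) + ln b"
      using assms b by (simp add: ln_mult)
    then show ?thesis
      by (simp add: x_def)
  qed
  also have "\<dots> < b * (q * ln q) / (b * (q * ln q) * (q + 1))"
    using ln_sum_mult_less[OF assms] assms b by (intro divide_strict_right_mono) (simp_all add: b_def)
  also have "\<dots> = 1 / (q + 1)"
    using assms b by simp
  finally show ?thesis .
qed

theorem lemmaA1:
  fixes q :: nat
  assumes "primepow q"
  shows "Mq (real q) ((real q - 1) / (real q + 1)) < 1 / (real q + 1)"
  using Mq_ratio_less primepow_gt_Suc_0[OF assms] by simp

end
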